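(* Let $\rho\in V_0$ be non-integral. Let $\mathcal A\subseteq\mathrm{End}_{\mathbb C}\,\mathcal C(\rho+\Lambda_+)$ be the algebra generated by the multiplication operators $m_h$ ($h\in\mathcal P^W$) and $L$. For $X\in\mathrm{End}_{\mathbb C}\,\mathcal C(\rho+\Lambda_+)$ define $\widehat X$ by $\widehat X(h):=\widehat{X(\widehat h)}$. Then $X\mapsto\widehat X$ restricts to an involutory automorphism of $\mathcal A$; more precisely $\widehat{m_h}=D_h$ for all $h\in\mathcal P^W$ and $\widehat L=-L$.
   Context: Setting: $V$ is a finite-dimensional complex vector space, $W\subseteq GL(V)$ a finite reflection group, $\Lambda_+\subseteq V$ a finitely generated submonoid whose minimal set of generators $\Sigma^\vee$ is a basis of $V$, and $\ell:V\to\mathbb C$ a $W$-invariant linear form with $\ell(\Lambda_+)\subseteq\mathbb N$; these data satisfy the axioms of F. Knop, "Construction of commuting difference operators for multiplicity free spaces" (the combinatorial data attached to multiplicity free representations). Notation: $\Gamma^\vee=\mathbb Z\Lambda_+$, $\Gamma\subseteq V^\vee$ its dual lattice, $\Sigma\subseteq V^\vee$ the dual basis of $\Sigma^\vee$, $\Phi=\bigcup_{w\in W}w\Sigma$, $\Delta\subseteq\Gamma$ the root system of $W$ with roots primitive in $\Gamma$, $\Delta^+=\{\alpha\in\Delta:\alpha(\Sigma^\vee)\ge0\}$, $\Lambda_1=\{w\eta:w\in W,\eta\in\Sigma^\vee,\ell(\eta)=1\}$. $V_0$ is the set of $\rho\in V$ with $\omega_1(\rho)=\omega_2(\rho)$ whenever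 $\omega_1,\omega_2\in\Sigma$, $\omega_1\in\pm W\omega_2$; for $\rho\in V_0$, $\omega\in\pm\Phi$, $k_\omega:=\omega_1(\rho)$ with $\omega_1\in(\pm W\omega)\cap\Sigma$. $\rho\in V_0$ is non-integral if $\alpha(\rho)\notin\mathbb Z$ for all $\alpha\in\Delta^+$. $\mathcal P$ = polynomial functions on $V$. Known: for such $\rho$ and $\lambda\in\Lambda_+$ there is a unique $p_\lambda\in\mathcal P^W$ with $\deg p_\lambda\le\ell(\lambda)$ and $p_\lambda(\rho+\mu)=\delta_{\lambda\mu}$ for all $\mu\in\Lambda_+$ with $\ell(\mu)\le\ell(\lambda)$; they form a basis of $\mathcal P^W$. $\mathcal C(\rho+\Lambda_+)$ is the space of complex functions on $\rho+\Lambda_+$ ($\mathcal P^W$ embeds by restriction), and for $h\in\mathcal C(\rho+\Lambda_+)$, $\widehat h(\rho+\mu):=\sum_{\tau\in\Lambda_+}(-1)^{\ell(\tau)}p_\tau(\rho+\mu)h(\rho+\tau)$ (finite sum). Difference operators: $[z\downarrow d]=z(z-1)\cdots(z-d+1)$ for $d>0$, $=1$ otherwise; for $\tau\in\Gamma^\vee$, $f_\tau(z)=\prod_{\omega\in\Phi}[\omega(z)-k_\omega\downarrow\omega(\tau)]\big/\prod_{\alpha\in\Delta}[\alpha(z)\downarrow\alpha(\tau)]$; $L$ acts on $\mathcal C(\rho+\Lambda_+)$ by $(Lh)(\rho+\lambda)=\sum_{\eta\in\Lambda_1}f_\eta(\rho+\lambda)h(\rho+\lambda-\eta)$, which is well defined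 since (known) $f_\eta(\rho+\lambda)=0$ whenever $\lambda\in\Lambda_+$, $\lambda-\eta\notin\Lambda_+$; on polynomials this is $L=\sum_{\eta\in\Lambda_1}f_\eta(z)T_\eta$ with $(T_\eta f)(z)=f(z-\eta)$. Known: $(\mathrm{ad}L)^n(m_h)=0$ for $n>\deg h$, and $D_h:=\sum_{n\ge0}\frac1{n!}(\mathrm{ad}L)^n(m_h)\in\mathcal A$ satisfies $D_h(p_\lambda)=h(\rho+\lambda)p_\lambda$. *)

theory Defs
  imports "HOL-Analysis.Analysis"
begin

text \<open>Coordinates: V is identified with 'n => complex via the basis Sigma-check
 (standard basis vectors), so Lambda_+ = N^n is represented by 'n => nat,
 Sigma = coordinate functionals, Gamma = integer coefficient functionals.
 C(rho + Lambda_+) is represented by functions ('n => nat) => complex.\<close>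

type_synonym 'n vec = "'n \<Rightarrow> complex"
type_synonym 'n wt = "'n \<Rightarrow> nat"
type_synonym 'n fn = "'n wt \<Rightarrow> complex"
type_synonym 'n op = "'n fn \<Rightarrow> 'n fn"

definition of_wt :: "'n wt \<Rightarrow> 'n vec" where
  "of_wt lam = (\<lambda>i. of_nat (lam i))"

definition shift :: "'n vec \<Rightarrow> 'n wt \<Rightarrow> 'n vec" where
  "shift rho lam = (\<lambda>i. rho i + of_nat (lam i))"

definition basis_vec :: "'n \<Rightarrow> 'n vec" where
  "basis_vec j = (\<lambda>i. if i = j then 1 else 0)"

definition coord :: "'n \<Rightarrow> 'n vec \<Rightarrow> complex" where
  "coord i = (\<lambda>x. x i)"

definition is_clinear :: "('n vec \<Rightarrow> 'n vec) \<Rightarrow> bool" where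
  "is_clinear w \<longleftrightarrow> (\<forall>x y. w (\<lambda>i. x i + y i) = (\<lambda>i. w x i + w y i))
                    \<and> (\<forall>c x. w (\<lambda>i. c * x i) = (\<lambda>i. c * w x i))"

definition is_reflection :: "('n::finite vec \<Rightarrow> 'n vec) \<Rightarrow> bool" where
  "is_reflection s \<longleftrightarrow> (\<exists>a c. a \<noteq> (\<lambda>i. 0) \<and> (\<Sum>i\<in>UNIV. c i * a i) = 2 \<and>
        s = (\<lambda>x. \<lambda>j. x j - (\<Sum>i\<in>UNIV. c i * x i) * a j))"

definition finite_reflection_group :: "('n::finite vec \<Rightarrow> 'n vec) set \<Rightarrow> bool" where
  "finite_reflection_group W \<longleftrightarrow>
     finite W \<and> id \<in> W \<and> (\<forall>w\<in>W. is_clinear w \<and> bij w)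
     \<and> (\<forall>v\<in>W. \<forall>w\<in>W. v \<circ> w \<in> W)
     \<and> (\<forall>w\<in>W. \<exists>ss. set ss \<subseteq> W \<inter> Collect is_reflection \<and> w = foldr (\<circ>) ss id)"

definition dual_act :: "('n vec \<Rightarrow> 'n vec) \<Rightarrow> ('n vec \<Rightarrow> complex) \<Rightarrow> ('n vec \<Rightarrow> complex)" where
  "dual_act w om = om \<circ> inv w"

definition Phi :: "('n vec \<Rightarrow> 'n vec) set \<Rightarrow> ('n vec \<Rightarrow> complex) set" where
  "Phi W = {dual_act w (coord i) | w i. w \<in> W}"

definition pmWorbit :: "('n vec \<Rightarrow> 'n vec) set \<Rightarrow> ('n vec \<Rightarrow> complex) \<Rightarrow> ('n vec \<Rightarrow> complex) set" where
  "pmWorbit W om = {dual_act w om | w. w \<in> W} \<union> {(\<lambda>x. - dual_act w om x) | w. w \<in> W}"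

definition V0 :: "('n vec \<Rightarrow> 'n vec) set \<Rightarrow> 'n vec set" where
  "V0 W = {rho. \<forall>i j. coord i \<in> pmWorbit W (coord j) \<longrightarrow> rho i = rho j}"

definition kval :: "('n vec \<Rightarrow> 'n vec) set \<Rightarrow> 'n vec \<Rightarrow> ('n vec \<Rightarrow> complex) \<Rightarrow> complex" where
  "kval W rho om = (SOME k. \<exists>i. coord i \<in> pmWorbit W om \<and> k = rho i)"

definition lf :: "('n::finite \<Rightarrow> int) \<Rightarrow> 'n vec \<Rightarrow> complex" where
  "lf c = (\<lambda>x. \<Sum>i\<in>UNIV. of_int (c i) * x i)"

definition primitive :: "('n \<Rightarrow> int) \<Rightarrow> bool" where
  "primitive c \<longleftrightarrow> c \<noteq> (\<lambda>i. 0) \<and> (\<forall>k d. c = (\<lambda>i. k * d i) \<longrightarrow> k = 1 \<or> k = -1)"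

definition Delta :: "('n::finite vec \<Rightarrow> 'n vec) set \<Rightarrow> ('n \<Rightarrow> int) set" where
  "Delta W = {c. primitive c \<and>
     (\<exists>s\<in>W. is_reflection s \<and> {x. s x = x} = {x. lf c x = 0})}"

definition Delta_pos :: "('n::finite vec \<Rightarrow> 'n vec) set \<Rightarrow> ('n \<Rightarrow> int) set" where
  "Delta_pos W = {c \<in> Delta W. \<forall>i. c i \<ge> 0}"

definition non_integral :: "('n::finite vec \<Rightarrow> 'n vec) set \<Rightarrow> 'n vec \<Rightarrow> bool" where
  "non_integral W rho \<longleftrightarrow> (\<forall>c\<in>Delta_pos W. lf c rho \<notin> \<int>)"

definition falling :: "complex \<Rightarrow> complex \<Rightarrow> complex" where
  "falling z d = (if d \<in> \<int> then (\<Prod>j<nat \<lfloor>Re d\<rfloor>. (z - of_nat j)) else 1)"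

definition f_tau :: "('n::finite vec \<Rightarrow> 'n vec) set \<Rightarrow> 'n vec \<Rightarrow> 'n vec \<Rightarrow> 'n vec \<Rightarrow> complex" where
  "f_tau W rho tau z =
     (\<Prod>om\<in>Phi W. falling (om z - kval W rho om) (om tau)) /
     (\<Prod>c\<in>Delta W. falling (lf c z) (lf c tau))"

text \<open>The linear form ell, with ell(Sigma-check) in N, given by its coefficients.\<close>
definition ellv :: "('n::finite \<Rightarrow> nat) \<Rightarrow> 'n vec \<Rightarrow> complex" where
  "ellv l = (\<lambda>x. \<Sum>i\<in>UNIV. of_nat (l i) * x i)"

definition level :: "('n::finite \<Rightarrow> nat) \<Rightarrow> 'n wt \<Rightarrow> nat" where
  "level l lam = (\<Sum>i\<in>UNIV. l i * lam i)"

definition Lambda1 :: "('n vec \<Rightarrow> 'n vec) set \<Rightarrow> ('n \<Rightarrow> nat) \<Rightarrow> 'n vec set" where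
  "Lambda1 W l = {w (basis_vec j) | w j. w \<in> W \<and> l j = 1}"

definition Lop :: "('n::finite vec \<Rightarrow> 'n vec) set \<Rightarrow> 'n vec \<Rightarrow> ('n \<Rightarrow> nat) \<Rightarrow> 'n op" where
  "Lop W rho l h = (\<lambda>lam. \<Sum>eta\<in>Lambda1 W l.
      if (\<exists>mu. of_wt mu = (\<lambda>i. of_nat (lam i) - eta i))
      then f_tau W rho eta (shift rho lam) * h (THE mu. of_wt mu = (\<lambda>i. of_nat (lam i) - eta i))
      else 0)"

definition deg_le :: "('n::finite vec \<Rightarrow> complex) \<Rightarrow> nat \<Rightarrow> bool" where
  "deg_le f d \<longleftrightarrow> (\<exists>c. f = (\<lambda>z. \<Sum>a\<in>{a::'n \<Rightarrow> nat. (\<Sum>i\<in>UNIV. a i) \<le> d}.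
                                    c a * (\<Prod>i\<in>UNIV. z i ^ a i)))"

definition polyfun :: "('n::finite vec \<Rightarrow> complex) \<Rightarrow> bool" where
  "polyfun f \<longleftrightarrow> (\<exists>d. deg_le f d)"

definition polydeg :: "('n::finite vec \<Rightarrow> complex) \<Rightarrow> nat" where
  "polydeg f = (LEAST d. deg_le f d)"

definition PW :: "('n::finite vec \<Rightarrow> 'n vec) set \<Rightarrow> ('n vec \<Rightarrow> complex) set" where
  "PW W = {f. polyfun f \<and> (\<forall>w\<in>W. \<forall>z. f (w z) = f z)}"

definition interp_prop :: "('n::finite vec \<Rightarrow> 'n vec) set \<Rightarrow> 'n vec \<Rightarrow> ('n \<Rightarrow> nat) \<Rightarrow> 'n wt
     \<Rightarrow> ('n vec \<Rightarrow> complex) \<Rightarrow> bool" where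
  "interp_prop W rho l lam p \<longleftrightarrow> p \<in> PW W \<and> deg_le p (level l lam) \<and>
     (\<forall>mu. level l mu \<le> level l lam \<longrightarrow> p (shift rho mu) = (if mu = lam then 1 else 0))"

definition pint :: "('n::finite vec \<Rightarrow> 'n vec) set \<Rightarrow> 'n vec \<Rightarrow> ('n \<Rightarrow> nat) \<Rightarrow> 'n wt
     \<Rightarrow> ('n vec \<Rightarrow> complex)" where
  "pint W rho l lam = (THE p. interp_prop W rho l lam p)"

definition restr :: "'n vec \<Rightarrow> ('n vec \<Rightarrow> complex) \<Rightarrow> 'n fn" where
  "restr rho f = (\<lambda>mu. f (shift rho mu))"

definition hatf :: "('n::finite vec \<Rightarrow> 'n vec) set \<Rightarrow> 'n vec \<Rightarrow> ('n \<Rightarrow> nat) \<Rightarrow> 'n fn \<Rightarrow> 'n fn" where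
  "hatf W rho l h = (\<lambda>mu. \<Sum>tau\<in>{tau. pint W rho l tau (shift rho mu) \<noteq> 0}.
       (-1) ^ level l tau * pint W rho l tau (shift rho mu) * h tau)"

definition hatE :: "('n::finite vec \<Rightarrow> 'n vec) set \<Rightarrow> 'n vec \<Rightarrow> ('n \<Rightarrow> nat) \<Rightarrow> 'n op \<Rightarrow> 'n op" where
  "hatE W rho l X = (\<lambda>h. hatf W rho l (X (hatf W rho l h)))"

definition op_add :: "'n op \<Rightarrow> 'n op \<Rightarrow> 'n op" where
  "op_add X Y = (\<lambda>g mu. X g mu + Y g mu)"
definition op_smult :: "complex \<Rightarrow> 'n op \<Rightarrow> 'n op" where
  "op_smult c X = (\<lambda>g mu. c * X g mu)"
definition op_neg :: "'n op \<Rightarrow> 'n op" where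
  "op_neg X = (\<lambda>g mu. - X g mu)"
definition op_zero :: "'n op" where
  "op_zero = (\<lambda>g mu. 0)"

definition mult_op :: "'n vec \<Rightarrow> ('n vec \<Rightarrow> complex) \<Rightarrow> 'n op" where
  "mult_op rho h = (\<lambda>g mu. h (shift rho mu) * g mu)"

definition adL :: "('n::finite vec \<Rightarrow> 'n vec) set \<Rightarrow> 'n vec \<Rightarrow> ('n \<Rightarrow> nat) \<Rightarrow> 'n op \<Rightarrow> 'n op" where
  "adL W rho l X = op_add (Lop W rho l \<circ> X) (op_neg (X \<circ> Lop W rho l))"

text \<open>D_h = sum_{n >= 0} (ad L)^n (m_h) / n!  (the terms vanish for n > deg h).\<close>
definition Dop :: "('n::finite vec \<Rightarrow> 'n vec) set \<Rightarrow> 'n vec \<Rightarrow> ('n \<Rightarrow> nat) \<Rightarrow> ('n vec \<Rightarrow> complex) \<Rightarrow> 'n op" where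
  "Dop W rho l h = (\<lambda>g mu. \<Sum>n\<le>polydeg h. (1 / of_nat (fact n)) * ((adL W rho l ^^ n) (mult_op rho h)) g mu)"

inductive_set alg :: "('n::finite vec \<Rightarrow> 'n vec) set \<Rightarrow> 'n vec \<Rightarrow> ('n \<Rightarrow> nat) \<Rightarrow> 'n op set"
  for W rho l where
  alg_mult: "h \<in> PW W \<Longrightarrow> mult_op rho h \<in> alg W rho l"
| alg_L: "Lop W rho l \<in> alg W rho l"
| alg_id: "id \<in> alg W rho l"
| alg_add: "X \<in> alg W rho l \<Longrightarrow> Y \<in> alg W rho l \<Longrightarrow> op_add X Y \<in> alg W rho l"
| alg_smult: "X \<in> alg W rho l \<Longrightarrow> op_smult c X \<in> alg W rho l"
| alg_comp: "X \<in> alg W rho l \<Longrightarrow> Y \<in> alg W rho l \<Longrightarrow> X \<circ> Y \<in> alg W rho l"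

end

theory Submission
  imports Defs
begin

text \<open>
  The transform is \<open>hat h = P (S h)\<close>, where \<open>S\<close> multiplies by \<open>(-1)^\<ell>(\<mu>)\<close> and \<open>P\<close>
  expands a function in the interpolation polynomials, \<open>P g = \<Sum>\<^sub>\<tau> g(\<tau>) p\<^sub>\<tau>\<close>. All operators
  involved are linear and lower triangular for the grading by \<open>\<ell>\<close> (their value at \<open>\<mu>\<close> only
  depends on levels \<open>\<le> \<ell>(\<mu>)\<close>), so they are determined by their values on delta functions.
  Since \<open>ad L (m\<^sub>\<ell>) = -L\<close>, we have \<open>D\<^sub>\<ell> = m\<^sub>\<ell> - L\<close>, and the eigenvalue equation for \<open>D\<^sub>\<ell>\<close>
  says that \<open>L p\<^sub>\<tau> = (\<ell> - \<ell>(\<tau>)) p\<^sub>\<tau>\<close>. From this, \<open>P\<close> commutes with \<open>L\<close>, \<open>S\<close> anticommutes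
  with \<open>L\<close> (which lowers the level by one), and \<open>(P S)\<^sup>2 = id\<close>. Conjugation by \<open>P S\<close> is then
  an involutive algebra automorphism of \<open>End C(\<rho> + \<Lambda>\<^sub>+)\<close> sending \<open>L\<close> to \<open>-L\<close>, and it sends
  \<open>m\<^sub>h\<close> to \<open>D\<^sub>h\<close> because \<open>D\<^sub>h P = P m\<^sub>h\<close> is the eigenvalue equation for \<open>D\<^sub>h\<close>. Hence it also
  preserves the algebra generated by the \<open>m\<^sub>h\<close> and \<open>L\<close>.
\<close>

section \<open>Operators that are lower triangular for a grading\<close>

definition linear_op :: "(('a \<Rightarrow> complex) \<Rightarrow> 'b \<Rightarrow> complex) \<Rightarrow> bool" where
  "linear_op X \<longleftrightarrow> (\<forall>g g'. X (\<lambda>v. g v + g' v) = (\<lambda>m. X g m + X g' m)) \<and>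
                  (\<forall>c g. X (\<lambda>v. c * g v) = (\<lambda>m. c * X g m))"

lemma linear_op_add: "linear_op X \<Longrightarrow> X (\<lambda>v. g v + g' v) m = X g m + X g' m"
  unfolding linear_op_def by metis

lemma linear_op_scale: "linear_op X \<Longrightarrow> X (\<lambda>v. c * g v) m = c * X g m"
  unfolding linear_op_def by metis

lemma linear_op_zero: "linear_op X \<Longrightarrow> X (\<lambda>v. 0) m = 0"
  using linear_op_scale[of X 0 "\<lambda>v. 0" m] by simp

lemma linear_op_minus: "linear_op X \<Longrightarrow> X (\<lambda>v. - g v) m = - X g m"
  using linear_op_scale[of X "-1" g m] by simp

lemma linear_op_diff: "linear_op X \<Longrightarrow> X (\<lambda>v. g v - g' v) m = X g m - X g' m"
  using linear_op_add[of X g "\<lambda>v. - g' v" m] linear_op_minus[of X g' m] by simp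

lemma linear_op_sum:
  assumes "linear_op X" "finite T"
  shows "X (\<lambda>v. \<Sum>t\<in>T. c t * u t v) m = (\<Sum>t\<in>T. c t * X (u t) m)"
  using assms(2)
proof (induction T arbitrary: m rule: finite_induct)
  case empty
  then show ?case using linear_op_zero[OF assms(1)] by simp
next
  case (insert x F)
  then show ?case
    using linear_op_add[OF assms(1)] linear_op_scale[OF assms(1)] by simp
qed

lemma linear_op_comp: "linear_op X \<Longrightarrow> linear_op Y \<Longrightarrow> linear_op (X \<circ> Y)"
  unfolding linear_op_def by simp

lemma linear_op_id: "linear_op id"
  unfolding linear_op_def by simp

lemma linear_op_op_add: "linear_op X \<Longrightarrow> linear_op Y \<Longrightarrow> linear_op (op_add X Y)"
  unfolding linear_op_def op_add_def by (simp add: fun_eq_iff algebra_simps)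

lemma linear_op_op_neg: "linear_op X \<Longrightarrow> linear_op (op_neg X)"
  unfolding linear_op_def op_neg_def by (simp add: fun_eq_iff algebra_simps)

lemma linear_op_lincomb:
  fixes A :: "'i \<Rightarrow> ('a \<Rightarrow> complex) \<Rightarrow> 'b \<Rightarrow> complex"
  assumes "\<And>n. n \<in> T \<Longrightarrow> linear_op (A n)"
  shows "linear_op (\<lambda>g m. \<Sum>n\<in>T. c n * A n g m)"
  unfolding linear_op_def
proof (intro conjI allI ext)
  fix g g' m
  show "(\<Sum>n\<in>T. c n * A n (\<lambda>v. g v + g' v) m) = (\<Sum>n\<in>T. c n * A n g m) + (\<Sum>n\<in>T. c n * A n g' m)"
    unfolding sum.distrib[symmetric]
    by (intro sum.cong refl) (simp add: linear_op_add[OF assms] distrib_left)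
next
  fix d g m
  show "(\<Sum>n\<in>T. c n * A n (\<lambda>v. d * g v) m) = d * (\<Sum>n\<in>T. c n * A n g m)"
    unfolding sum_distrib_left
    by (intro sum.cong refl) (simp add: linear_op_scale[OF assms] mult.left_commute)
qed

definition mult_fn :: "('a \<Rightarrow> complex) \<Rightarrow> ('a \<Rightarrow> complex) \<Rightarrow> 'a \<Rightarrow> complex" where
  "mult_fn k g = (\<lambda>m. k m * g m)"

lemma linear_op_mult_fn: "linear_op (mult_fn k)"
  unfolding linear_op_def mult_fn_def by (simp add: fun_eq_iff algebra_simps)

definition delta_fn :: "'a \<Rightarrow> 'a \<Rightarrow> complex" where
  "delta_fn t = (\<lambda>v. if v = t then 1 else 0)"

definition lower_triangular :: "('a \<Rightarrow> nat) \<Rightarrow> (('a \<Rightarrow> complex) \<Rightarrow> 'a \<Rightarrow> complex) \<Rightarrow> bool" where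
  "lower_triangular deg X \<longleftrightarrow>
     (\<forall>g g' m. (\<forall>v. deg v \<le> deg m \<longrightarrow> g v = g' v) \<longrightarrow> X g m = X g' m)"

lemma lower_triangularD:
  "lower_triangular deg X \<Longrightarrow> (\<And>v. deg v \<le> deg m \<Longrightarrow> g v = g' v) \<Longrightarrow> X g m = X g' m"
  unfolding lower_triangular_def by blast

lemma lower_triangular_comp:
  assumes X: "lower_triangular deg X" and Y: "lower_triangular deg Y"
  shows "lower_triangular deg (X \<circ> Y)"
  unfolding lower_triangular_def comp_def
proof (intro allI impI)
  fix g g' :: "'a \<Rightarrow> complex" and m
  assume "\<forall>v. deg v \<le> deg m \<longrightarrow> g v = g' v"
  then have "Y g v = Y g' v" if "deg v \<le> deg m" for v
    using that by (intro lower_triangularD[OF Y]) auto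
  then show "X (Y g) m = X (Y g') m"
    by (rule lower_triangularD[OF X])
qed

lemma lower_triangular_id: "lower_triangular deg id"
  unfolding lower_triangular_def by simp

lemma lower_triangular_mult_fn: "lower_triangular deg (mult_fn k)"
  unfolding lower_triangular_def mult_fn_def by simp

lemma lower_triangular_op_add:
  "lower_triangular deg X \<Longrightarrow> lower_triangular deg Y \<Longrightarrow> lower_triangular deg (op_add X Y)"
  unfolding lower_triangular_def op_add_def by metis

lemma lower_triangular_op_neg: "lower_triangular deg X \<Longrightarrow> lower_triangular deg (op_neg X)"
  unfolding lower_triangular_def op_neg_def by metis

lemma lower_triangular_lincomb:
  fixes A :: "'i \<Rightarrow> ('a \<Rightarrow> complex) \<Rightarrow> 'a \<Rightarrow> complex"
  assumes "\<And>n. n \<in> T \<Longrightarrow> lower_triangular deg (A n)"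
  shows "lower_triangular deg (\<lambda>g m. \<Sum>n\<in>T. c n * A n g m)"
  unfolding lower_triangular_def
proof (intro allI impI)
  fix g g' :: "'a \<Rightarrow> complex" and m
  assume "\<forall>v. deg v \<le> deg m \<longrightarrow> g v = g' v"
  then have "A n g m = A n g' m" if "n \<in> T" for n
    by (intro lower_triangularD[OF assms[OF that]]) blast
  then show "(\<Sum>n\<in>T. c n * A n g m) = (\<Sum>n\<in>T. c n * A n g' m)"
    by simp
qed

lemma lower_triangular_expand:
  assumes "linear_op X" "lower_triangular deg X" "finite {v. deg v \<le> deg m}"
  shows "X g m = (\<Sum>t | deg t \<le> deg m. g t * X (delta_fn t) m)"
proof -
  have "X g m = X (\<lambda>v. \<Sum>t | deg t \<le> deg m. g t * delta_fn t v) m"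
    using assms(3) by (intro lower_triangularD[OF assms(2)])
      (simp add: delta_fn_def if_distrib cong: if_cong)
  also have "\<dots> = (\<Sum>t | deg t \<le> deg m. g t * X (delta_fn t) m)"
    by (rule linear_op_sum[OF assms(1,3)])
  finally show ?thesis .
qed

lemma lower_triangular_eqI:
  assumes "\<And>n. finite {v. deg v \<le> n}"
    and "linear_op X" "lower_triangular deg X" "linear_op Y" "lower_triangular deg Y"
    and "\<And>t. X (delta_fn t) = Y (delta_fn t)"
  shows "X = Y"
proof (intro ext)
  fix g m
  have "X g m = (\<Sum>t | deg t \<le> deg m. g t * X (delta_fn t) m)"
    by (rule lower_triangular_expand[OF assms(2,3,1)])
  also have "\<dots> = (\<Sum>t | deg t \<le> deg m. g t * Y (delta_fn t) m)"
    by (simp add: assms(6))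
  also have "\<dots> = Y g m"
    by (rule lower_triangular_expand[OF assms(4,5,1), symmetric])
  finally show "X g m = Y g m" .
qed

section \<open>Polynomials, weights and the operator L\<close>

lemma finite_bounded_fns: "finite {a::'n::finite \<Rightarrow> nat. \<forall>i. a i \<le> n}"
proof -
  have "{a::'n \<Rightarrow> nat. \<forall>i. a i \<le> n} = Pi\<^sub>E UNIV (\<lambda>_. {..n})"
    by (auto simp: PiE_UNIV_domain Pi_def)
  then show ?thesis by (simp add: finite_PiE)
qed

lemma deg_le_0_constant:
  assumes "deg_le (p::'n::finite vec \<Rightarrow> complex) 0"
  shows "p z = p z'"
proof -
  obtain c where c: "p = (\<lambda>z. \<Sum>a\<in>{a::'n \<Rightarrow> nat. (\<Sum>i\<in>UNIV. a i) \<le> 0}. c a * (\<Prod>i\<in>UNIV. z i ^ a i))"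
    using assms unfolding deg_le_def by blast
  have "{a::'n \<Rightarrow> nat. (\<Sum>i\<in>UNIV. a i) \<le> 0} = {\<lambda>i. 0}"
    by (auto simp: fun_eq_iff)
  then show ?thesis unfolding c by simp
qed

lemma deg_le_linear_form: "deg_le (\<lambda>z::'n::finite vec. \<Sum>i\<in>UNIV. c i * z i) 1"
proof -
  let ?A = "{a::'n \<Rightarrow> nat. (\<Sum>i\<in>UNIV. a i) \<le> 1}"
  define e where "e i = (\<lambda>j. if j = i then 1 else 0::nat)" for i :: 'n
  define d where "d a = (\<Sum>i\<in>UNIV. if a = e i then c i else 0)" for a :: "'n \<Rightarrow> nat"
  have "?A \<subseteq> {a. \<forall>i. a i \<le> 1}"
  proof safe
    fix a :: "'n \<Rightarrow> nat" and i
    assume "sum a UNIV \<le> 1"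
    moreover have "a i \<le> sum a UNIV" by (rule member_le_sum) auto
    ultimately show "a i \<le> 1" by simp
  qed
  then have fin: "finite ?A"
    using finite_bounded_fns finite_subset by blast
  have e_in: "e i \<in> ?A" for i
    by (simp add: e_def)
  have monomial_e: "(\<Prod>j\<in>UNIV. z j ^ e i j) = z i" for z :: "'n vec" and i
    by (simp add: e_def if_distrib cong: if_cong)
  have "(\<Sum>a\<in>?A. d a * (\<Prod>j\<in>UNIV. z j ^ a j)) = (\<Sum>i\<in>UNIV. c i * z i)" for z
  proof -
    have "(\<Sum>a\<in>?A. d a * (\<Prod>j\<in>UNIV. z j ^ a j))
        = (\<Sum>a\<in>?A. \<Sum>i\<in>UNIV. if a = e i then c i * (\<Prod>j\<in>UNIV. z j ^ a j) else 0)"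
      unfolding d_def sum_distrib_right by (intro sum.cong refl) auto
    also have "\<dots> = (\<Sum>i\<in>UNIV. \<Sum>a\<in>?A. if a = e i then c i * (\<Prod>j\<in>UNIV. z j ^ a j) else 0)"
      by (rule sum.swap)
    also have "\<dots> = (\<Sum>i\<in>UNIV. c i * z i)"
      using fin e_in by (simp add: monomial_e)
    finally show ?thesis .
  qed
  then have "(\<lambda>z. \<Sum>i\<in>UNIV. c i * z i) = (\<lambda>z. \<Sum>a\<in>?A. d a * (\<Prod>j\<in>UNIV. z j ^ a j))"
    by simp
  then show ?thesis
    unfolding deg_le_def by (rule exI[of _ d])
qed

lemma of_wt_inj: "of_wt a = of_wt b \<Longrightarrow> a = b"
  by (auto simp: of_wt_def fun_eq_iff)

lemma the_of_wt_eq: "of_wt v = x \<Longrightarrow> (THE mu. of_wt mu = x) = v"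
  using of_wt_inj by (intro the_equality) auto

lemma ellv_of_wt: "ellv l (of_wt v) = of_nat (level l v)"
  by (simp add: ellv_def of_wt_def level_def)

lemma ellv_shift: "ellv l (shift rho v) = ellv l rho + of_nat (level l v)"
  by (simp add: ellv_def shift_def level_def distrib_left sum.distrib)

lemma linear_op_Lop: "linear_op (Lop W rho l)"
  unfolding linear_op_def Lop_def
  by (simp add: fun_eq_iff sum.distrib[symmetric] sum_distrib_left distrib_left mult_ac
      if_distrib cong: if_cong)

lemma linear_op_mult_op: "linear_op (mult_op rho h)"
  unfolding linear_op_def mult_op_def by (simp add: fun_eq_iff algebra_simps)

lemma lower_triangular_mult_op: "lower_triangular deg (mult_op rho h)"
  unfolding lower_triangular_def mult_op_def by simp

lemma adL_op_zero: "adL W rho l op_zero = op_zero"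
  by (simp add: fun_eq_iff adL_def op_add_def op_neg_def op_zero_def linear_op_zero[OF linear_op_Lop])

lemma adL_op_neg_Lop: "adL W rho l (op_neg (Lop W rho l)) = op_zero"
  by (simp add: fun_eq_iff adL_def op_add_def op_neg_def op_zero_def linear_op_minus[OF linear_op_Lop])

lemma linear_op_adL_power: "linear_op X \<Longrightarrow> linear_op ((adL W rho l ^^ n) X)"
  by (induction n) (simp_all add: adL_def linear_op_op_add linear_op_op_neg linear_op_comp linear_op_Lop)

lemma linear_op_Dop: "linear_op (Dop W rho l h)"
  unfolding Dop_def by (intro linear_op_lincomb linear_op_adL_power linear_op_mult_op)

lemma alg_op_neg:
  assumes "X \<in> alg W rho l"
  shows "op_neg X \<in> alg W rho l"
proof -
  have "op_smult (-1) X \<in> alg W rho l"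
    using assms by (rule alg_smult)
  then show ?thesis
    by (simp add: op_smult_def op_neg_def)
qed

lemma alg_lincomb:
  assumes "finite T" "\<And>n. n \<in> T \<Longrightarrow> A n \<in> alg W rho l"
  shows "(\<lambda>g m. \<Sum>n\<in>T. c n * A n g m) \<in> alg W rho l"
  using assms
proof (induction T rule: finite_induct)
  case empty
  then show ?case
    using alg_smult[OF alg_id, where c = 0] by (simp add: op_smult_def)
next
  case (insert x F)
  then have "op_add (op_smult (c x) (A x)) (\<lambda>g m. \<Sum>n\<in>F. c n * A n g m) \<in> alg W rho l"
    by (intro alg_add alg_smult) auto
  with insert show ?case
    by (simp add: op_smult_def op_add_def)
qed

lemma alg_adL_power: "X \<in> alg W rho l \<Longrightarrow> (adL W rho l ^^ n) X \<in> alg W rho l"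
  by (induction n) (simp_all add: adL_def alg_add alg_comp alg_op_neg alg_L)

lemma alg_Dop: "h \<in> PW W \<Longrightarrow> Dop W rho l h \<in> alg W rho l"
  unfolding Dop_def by (intro alg_lincomb alg_adL_power alg_mult) auto

locale invariant_ell =
  fixes W :: "('n::finite vec \<Rightarrow> 'n vec) set" and l :: "'n \<Rightarrow> nat"
  assumes ell_inv: "\<forall>w\<in>W. \<forall>z. ellv l (w z) = ellv l z"
begin

lemma ellv_Lambda1:
  assumes "eta \<in> Lambda1 W l"
  shows "ellv l eta = 1"
proof -
  obtain w j where "w \<in> W" "l j = 1" "eta = w (basis_vec j)"
    using assms unfolding Lambda1_def by blast
  then show ?thesis
    using ell_inv by (simp add: ellv_def basis_vec_def if_distrib cong: if_cong)
qed

lemma level_Lambda1_step: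
  assumes "eta \<in> Lambda1 W l" "of_wt v = (\<lambda>i. of_nat (m i) - eta i)"
  shows "level l m = Suc (level l v)"
proof -
  have "(of_nat (level l v) :: complex) = ellv l (\<lambda>i. of_nat (m i) - eta i)"
    using assms(2) ellv_of_wt by metis
  also have "\<dots> = of_nat (level l m) - 1"
    using ellv_Lambda1[OF assms(1)]
    by (simp add: ellv_def level_def right_diff_distrib sum_subtractf)
  finally have "(of_nat (level l m) :: complex) = of_nat (Suc (level l v))"
    by simp
  then show ?thesis
    by (simp only: of_nat_eq_iff)
qed

lemma Lop_cong:
  assumes "\<And>v. level l m = Suc (level l v) \<Longrightarrow> g v = g' v"
  shows "Lop W rho l g m = Lop W rho l g' m"
  unfolding Lop_def
proof (intro sum.cong refl if_cong)
  fix eta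
  assume eta: "eta \<in> Lambda1 W l" and "\<exists>mu. of_wt mu = (\<lambda>i. of_nat (m i) - eta i)"
  then obtain v where v: "of_wt v = (\<lambda>i. of_nat (m i) - eta i)"
    by blast
  have "g v = g' v"
    using assms level_Lambda1_step[OF eta v] by blast
  then show "f_tau W rho eta (shift rho m) * g (THE mu. of_wt mu = (\<lambda>i. of_nat (m i) - eta i))
           = f_tau W rho eta (shift rho m) * g' (THE mu. of_wt mu = (\<lambda>i. of_nat (m i) - eta i))"
    by (simp add: the_of_wt_eq[OF v])
qed

lemma lower_triangular_Lop: "lower_triangular (level l) (Lop W rho l)"
  unfolding lower_triangular_def by (auto intro!: Lop_cong)

lemma Lop_eq_0:
  assumes "\<And>v. level l m = Suc (level l v) \<Longrightarrow> g v = 0"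
  shows "Lop W rho l g m = 0"
proof -
  have "Lop W rho l g m = Lop W rho l (\<lambda>v. 0) m"
    using assms by (intro Lop_cong) auto
  then show ?thesis
    using linear_op_zero[OF linear_op_Lop] by simp
qed

lemma Lop_mult:
  assumes "\<And>v. level l m = Suc (level l v) \<Longrightarrow> k v = c"
  shows "Lop W rho l (\<lambda>v. k v * g v) m = c * Lop W rho l g m"
proof -
  have "Lop W rho l (\<lambda>v. k v * g v) m = Lop W rho l (\<lambda>v. c * g v) m"
    using assms by (intro Lop_cong) auto
  then show ?thesis
    using linear_op_scale[OF linear_op_Lop] by simp
qed

lemma ellv_in_PW: "ellv l \<in> PW W"
proof -
  have "deg_le (ellv l) 1"
    unfolding ellv_def by (rule deg_le_linear_form)
  then show ?thesis
    using ell_inv unfolding PW_def polyfun_def by blast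
qed

lemma adL_mult_op_ellv: "adL W rho l (mult_op rho (ellv l)) = op_neg (Lop W rho l)"
proof (intro ext)
  fix g m
  have "Lop W rho l (\<lambda>v. ellv l (shift rho v) * g v) m = (ellv l (shift rho m) - 1) * Lop W rho l g m"
    by (rule Lop_mult) (simp add: ellv_shift)
  then show "adL W rho l (mult_op rho (ellv l)) g m = op_neg (Lop W rho l) g m"
    by (simp add: adL_def op_add_def op_neg_def mult_op_def algebra_simps)
qed

lemma adL_power_mult_op_ellv: "(adL W rho l ^^ Suc (Suc k)) (mult_op rho (ellv l)) = op_zero"
  by (induction k) (simp_all add: adL_mult_op_ellv adL_op_neg_Lop adL_op_zero)

lemma lower_triangular_adL_power:
  "lower_triangular (level l) X \<Longrightarrow> lower_triangular (level l) ((adL W rho l ^^ n) X)"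
  by (induction n) (simp_all add: adL_def lower_triangular_op_add lower_triangular_op_neg
      lower_triangular_comp lower_triangular_Lop)

lemma lower_triangular_Dop: "lower_triangular (level l) (Dop W rho l h)"
  unfolding Dop_def
  by (intro lower_triangular_lincomb lower_triangular_adL_power lower_triangular_mult_op)

end

section \<open>Expansion in the interpolation basis\<close>

locale interpolation_setting = invariant_ell W l
  for W :: "('n::finite vec \<Rightarrow> 'n vec) set" and l :: "'n \<Rightarrow> nat" +
  fixes rho :: "'n vec"
  assumes known_interp: "\<forall>lam. \<exists>!p. interp_prop W rho l lam p"
    and known_adnil: "\<forall>h\<in>PW W. \<forall>n. n > polydeg h \<longrightarrow> (adL W rho l ^^ n) (mult_op rho h) = op_zero"
    and known_eigen: "\<forall>h\<in>PW W. \<forall>lam. Dop W rho l h (restr rho (pint W rho l lam))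
        = (\<lambda>mu. h (shift rho lam) * restr rho (pint W rho l lam) mu)"
begin

abbreviation lev :: "'n wt \<Rightarrow> nat" where "lev \<equiv> level l"
abbreviation L :: "'n op" where "L \<equiv> Lop W rho l"

definition interp_fn :: "'n wt \<Rightarrow> 'n fn" where
  "interp_fn t = restr rho (pint W rho l t)"

definition interp_sum :: "'n op" where
  "interp_sum g m = (\<Sum>t | lev t \<le> lev m. interp_fn t m * g t)"

definition sign_op :: "'n op" where
  "sign_op = mult_fn (\<lambda>m. (-1) ^ lev m)"

lemma sign_op_apply: "sign_op g m = (-1) ^ lev m * g m"
  by (simp add: sign_op_def mult_fn_def)

lemma interp_prop_pint: "interp_prop W rho l t (pint W rho l t)"
  unfolding pint_def using known_interp by (metis theI')

lemma interp_fn_lower: "lev m \<le> lev t \<Longrightarrow> interp_fn t m = delta_fn t m"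
  using interp_prop_pint[of t]
  unfolding interp_prop_def interp_fn_def restr_def delta_fn_def by auto

lemma interp_fn_below: "lev m < lev t \<Longrightarrow> interp_fn t m = 0"
  using interp_fn_lower[of m t] by (auto simp: delta_fn_def)

text \<open>A coordinate of level 0 would force the constant \<open>p\<^sub>0\<close> to take both values 1 and 0
  on level 0.\<close>
lemma level_coeff_pos: "0 < l i"
proof (rule ccontr)
  assume "\<not> 0 < l i"
  define e where "e = (\<lambda>j. if j = i then 1 else 0::nat)"
  have lev_e: "lev e = 0" and lev_0: "lev (\<lambda>_. 0) = 0"
    using \<open>\<not> 0 < l i\<close> by (simp_all add: level_def e_def if_distrib cong: if_cong)
  have "deg_le (pint W rho l (\<lambda>_. 0)) 0"
    using interp_prop_pint[of "\<lambda>_. 0"] lev_0 unfolding interp_prop_def by simp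
  then have "interp_fn (\<lambda>_. 0) (\<lambda>_. 0) = interp_fn (\<lambda>_. 0) e"
    unfolding interp_fn_def restr_def by (rule deg_le_0_constant)
  moreover have "e \<noteq> (\<lambda>_. 0)"
    by (auto simp: e_def fun_eq_iff)
  ultimately show False
    using interp_fn_lower[of "\<lambda>_. 0" "\<lambda>_. 0"] interp_fn_lower[of e "\<lambda>_. 0"] lev_e lev_0
    by (simp add: delta_fn_def)
qed

lemma finite_level_le: "finite {v. lev v \<le> n}"
proof -
  have "{v. lev v \<le> n} \<subseteq> {a. \<forall>i. a i \<le> n}"
  proof safe
    fix v i
    assume "lev v \<le> n"
    moreover have "l i * v i \<le> lev v"
      unfolding level_def by (rule member_le_sum) auto
    moreover have "v i \<le> l i * v i"
      using level_coeff_pos[of i] by simp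
    ultimately show "v i \<le> n" by linarith
  qed
  then show ?thesis
    using finite_bounded_fns finite_subset by blast
qed

lemma linear_op_interp_sum: "linear_op interp_sum"
  unfolding linear_op_def interp_sum_def
  by (simp add: fun_eq_iff algebra_simps sum.distrib sum_distrib_left)

lemma lower_triangular_interp_sum: "lower_triangular lev interp_sum"
  unfolding lower_triangular_def interp_sum_def by (auto intro!: sum.cong)

lemma interp_sum_delta_fn: "interp_sum (delta_fn t) = interp_fn t"
proof (rule ext)
  fix m
  have "interp_sum (delta_fn t) m = (if lev t \<le> lev m then interp_fn t m else 0)"
    unfolding interp_sum_def delta_fn_def
    by (simp add: if_distrib finite_level_le cong: if_cong)
  then show "interp_sum (delta_fn t) m = interp_fn t m"
    using interp_fn_below[of m t] by auto
qed

lemma interp_sum_eq_self: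
  assumes "\<And>s. lev s < lev m \<Longrightarrow> g s = 0"
  shows "interp_sum g m = g m"
proof -
  have "interp_sum g m = (\<Sum>t | lev t \<le> lev m. if t = m then g m else 0)"
    unfolding interp_sum_def
  proof (intro sum.cong refl)
    fix t
    assume "t \<in> {t. lev t \<le> lev m}"
    then show "interp_fn t m * g t = (if t = m then g m else 0)"
      using assms[of t] interp_fn_lower[of m t]
      by (cases "lev t = lev m") (auto simp: delta_fn_def)
  qed
  also have "\<dots> = g m"
    by (simp add: finite_level_le)
  finally show ?thesis .
qed

lemma hatf_eq: "hatf W rho l g = interp_sum (sign_op g)"
proof (rule ext)
  fix m
  have sub: "{tau. pint W rho l tau (shift rho m) \<noteq> 0} \<subseteq> {t. lev t \<le> lev m}"
    using interp_fn_below[of m] by (force simp: interp_fn_def restr_def)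
  show "hatf W rho l g m = interp_sum (sign_op g) m"
    unfolding hatf_def interp_sum_def sign_op_apply
    by (rule sum.mono_neutral_cong_left[OF finite_level_le sub])
      (auto simp: interp_fn_def restr_def)
qed

lemma Dop_ellv: "Dop W rho l (ellv l) g m = ellv l (shift rho m) * g m - L g m"
proof (cases "polydeg (ellv l) = 0")
  case True
  have "(adL W rho l ^^ 1) (mult_op rho (ellv l)) = op_zero"
    by (rule known_adnil[rule_format, OF ellv_in_PW]) (simp add: True)
  then have "op_neg L = op_zero"
    by (simp add: adL_mult_op_ellv)
  then have "L g m = 0"
    by (metis op_neg_def op_zero_def neg_equal_0_iff_equal)
  with True show ?thesis
    by (simp add: Dop_def mult_op_def)
next
  case False
  have vanish: "(adL W rho l ^^ n) (mult_op rho (ellv l)) = op_zero" if "2 \<le> n" for n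
  proof -
    obtain k where "n = 2 + k"
      using le_Suc_ex[OF \<open>2 \<le> n\<close>] by blast
    then have "n = Suc (Suc k)" by simp
    then show ?thesis by (simp only: adL_power_mult_op_ellv)
  qed
  have "Dop W rho l (ellv l) g m
      = (\<Sum>n\<in>{0, 1}. 1 / of_nat (fact n) * (adL W rho l ^^ n) (mult_op rho (ellv l)) g m)"
    unfolding Dop_def using False vanish
    by (intro sum.mono_neutral_right) (auto simp: op_zero_def)
  also have "\<dots> = ellv l (shift rho m) * g m - L g m"
    by (simp add: adL_mult_op_ellv op_neg_def) (simp add: mult_op_def)
  finally show ?thesis .
qed

text \<open>The eigenvalue equation \<open>D\<^sub>\<ell> p\<^sub>t = \<ell>(\<rho> + t) p\<^sub>t\<close> read through \<open>D\<^sub>\<ell> = m\<^sub>\<ell> - L\<close>.\<close>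
lemma Lop_interp_fn: "L (interp_fn t) m = (of_nat (lev m) - of_nat (lev t)) * interp_fn t m"
proof -
  have "Dop W rho l (ellv l) (interp_fn t) m = ellv l (shift rho t) * interp_fn t m"
    using known_eigen ellv_in_PW unfolding interp_fn_def by simp
  then show ?thesis
    by (simp add: Dop_ellv ellv_shift algebra_simps)
qed

lemma Lop_interp_sum:
  "L (interp_sum g) m = of_nat (lev m) * interp_sum g m - interp_sum (\<lambda>v. of_nat (lev v) * g v) m"
proof -
  have "L (interp_sum g) m = (\<Sum>t | lev t \<le> lev m. g t * L (interp_fn t) m)"
    using lower_triangular_expand[OF linear_op_comp[OF linear_op_Lop linear_op_interp_sum]
        lower_triangular_comp[OF lower_triangular_Lop lower_triangular_interp_sum] finite_level_le]
    by (simp add: interp_sum_delta_fn)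
  also have "\<dots> = of_nat (lev m) * interp_sum g m - interp_sum (\<lambda>v. of_nat (lev v) * g v) m"
    unfolding interp_sum_def sum_distrib_left sum_subtractf[symmetric] Lop_interp_fn
    by (intro sum.cong refl) (simp add: algebra_simps)
  finally show ?thesis .
qed

lemma Lop_delta_fn_eq_0: "lev v \<noteq> Suc (lev t) \<Longrightarrow> L (delta_fn t) v = 0"
  by (rule Lop_eq_0) (auto simp: delta_fn_def)

lemma Lop_Lop_interp_fn:
  "L (L (interp_fn t)) m = (of_nat (lev m) - 1 - of_nat (lev t)) * L (interp_fn t) m"
proof -
  have "L (interp_fn t) = (\<lambda>v. (of_nat (lev v) - of_nat (lev t)) * interp_fn t v)"
    by (simp add: fun_eq_iff Lop_interp_fn)
  then have "L (L (interp_fn t)) m = L (\<lambda>v. (of_nat (lev v) - of_nat (lev t)) * interp_fn t v) m"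
    by simp
  also have "\<dots> = (of_nat (lev m) - 1 - of_nat (lev t)) * L (interp_fn t) m"
    by (rule Lop_mult) simp
  finally show ?thesis .
qed

lemma Lop_interp_sum_Lop_delta_fn:
  "L (interp_sum (L (delta_fn t))) m
     = (of_nat (lev m) - of_nat (lev t) - 1) * interp_sum (L (delta_fn t)) m"
proof -
  have level_eq: "(\<lambda>v. of_nat (lev v) * L (delta_fn t) v) = (\<lambda>v. (of_nat (lev t) + 1) * L (delta_fn t) v)"
  proof (rule ext)
    fix v
    show "of_nat (lev v) * L (delta_fn t) v = (of_nat (lev t) + 1) * L (delta_fn t) v"
      by (cases "lev v = Suc (lev t)") (simp_all add: Lop_delta_fn_eq_0)
  qed
  have "interp_sum (\<lambda>v. of_nat (lev v) * L (delta_fn t) v) m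
      = (of_nat (lev t) + 1) * interp_sum (L (delta_fn t)) m"
    unfolding level_eq by (rule linear_op_scale[OF linear_op_interp_sum])
  then show ?thesis
    unfolding Lop_interp_sum by (simp add: algebra_simps)
qed

text \<open>The difference \<open>c\<close> of the two sides satisfies \<open>L c = (\<ell> - \<ell>(t) - 1) c\<close>; as \<open>L c\<close> at
  level \<open>n\<close> only depends on \<open>c\<close> at level \<open>n - 1\<close>, induction on the level shows \<open>c = 0\<close>
  away from level \<open>\<ell>(t) + 1\<close>, where both sides reduce to \<open>L \<delta>\<^sub>t\<close>.\<close>
lemma Lop_interp_fn_eq_interp_sum: "L (interp_fn t) m = interp_sum (L (delta_fn t)) m"
proof (induction "lev m" arbitrary: m rule: less_induct)
  case less
  show ?case
  proof (cases "lev m = Suc (lev t)")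
    case True
    have "L (interp_fn t) m = L (delta_fn t) m"
      using True by (intro Lop_cong) (simp add: interp_fn_lower)
    moreover have "interp_sum (L (delta_fn t)) m = L (delta_fn t) m"
      using True by (intro interp_sum_eq_self Lop_delta_fn_eq_0) simp
    ultimately show ?thesis by simp
  next
    case False
    define c where "c = (\<lambda>v. L (interp_fn t) v - interp_sum (L (delta_fn t)) v)"
    have "L c m = 0"
      using less by (intro Lop_eq_0) (simp add: c_def)
    moreover have "L c m = L (L (interp_fn t)) m - L (interp_sum (L (delta_fn t))) m"
      unfolding c_def by (rule linear_op_diff[OF linear_op_Lop])
    ultimately have "(of_nat (lev m) - of_nat (lev t) - 1) * c m = 0"
      by (simp add: c_def Lop_Lop_interp_fn Lop_interp_sum_Lop_delta_fn algebra_simps)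
    moreover have "(of_nat (lev m) - of_nat (lev t) - 1 :: complex) \<noteq> 0"
      using False by (metis diff_diff_eq eq_iff_diff_eq_0 of_nat_Suc of_nat_eq_iff add.commute)
    ultimately show ?thesis
      by (simp add: c_def)
  qed
qed

lemma interp_sum_Lop: "interp_sum (L g) = L (interp_sum g)"
proof -
  have "interp_sum \<circ> L = L \<circ> interp_sum"
    by (rule lower_triangular_eqI[OF finite_level_le])
      (simp_all add: linear_op_comp linear_op_interp_sum linear_op_Lop lower_triangular_comp
        lower_triangular_interp_sum lower_triangular_Lop fun_eq_iff interp_sum_delta_fn
        Lop_interp_fn_eq_interp_sum)
  then show ?thesis
    by (metis comp_apply)
qed

lemma Lop_sign_op: "L (sign_op g) m = - sign_op (L g) m"
proof -
  have "L (sign_op g) m = - ((-1) ^ lev m) * L g m"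
    unfolding sign_op_def mult_fn_def by (rule Lop_mult) simp
  then show ?thesis
    by (simp add: sign_op_apply)
qed

lemma interp_sum_level_eigen:
  assumes "\<And>v. L u v = (c - of_nat (lev v)) * u v"
  shows "(of_nat (lev m) - c) * interp_sum u m = 0"
proof -
  have "L u = (\<lambda>v. c * u v - of_nat (lev v) * u v)"
    by (simp add: fun_eq_iff assms algebra_simps)
  then have "interp_sum (L u) m = c * interp_sum u m - interp_sum (\<lambda>v. of_nat (lev v) * u v) m"
    by (simp add: linear_op_diff[OF linear_op_interp_sum] linear_op_scale[OF linear_op_interp_sum])
  moreover have "interp_sum (L u) m = L (interp_sum u) m"
    by (simp add: interp_sum_Lop)
  ultimately show ?thesis
    by (simp add: Lop_interp_sum algebra_simps)
qed

lemma interp_sum_sign_delta_fn: "interp_sum (sign_op (delta_fn t)) = (\<lambda>v. (-1) ^ lev t * interp_fn t v)"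
proof -
  have sign_delta: "sign_op (delta_fn t) = (\<lambda>v. (-1) ^ lev t * delta_fn t v)"
    by (rule ext) (simp add: sign_op_apply delta_fn_def)
  show ?thesis
    unfolding sign_delta
    by (rule ext) (simp add: linear_op_scale[OF linear_op_interp_sum] interp_sum_delta_fn)
qed

lemma sign_interp_sum_sign_delta_fn:
  "sign_op (interp_sum (sign_op (delta_fn t))) v = (-1) ^ (lev v + lev t) * interp_fn t v"
  by (simp add: interp_sum_sign_delta_fn sign_op_apply power_add)

lemma Lop_sign_interp_sum_sign_delta_fn:
  "L (sign_op (interp_sum (sign_op (delta_fn t)))) v
     = (of_nat (lev t) - of_nat (lev v)) * sign_op (interp_sum (sign_op (delta_fn t))) v"
proof -
  have "L (sign_op (interp_sum (sign_op (delta_fn t)))) v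
      = - ((-1) ^ lev v * L (\<lambda>v. (-1) ^ lev t * interp_fn t v) v)"
    by (simp add: Lop_sign_op interp_sum_sign_delta_fn sign_op_apply)
  also have "\<dots> = - ((-1) ^ lev v * ((-1) ^ lev t * L (interp_fn t) v))"
    by (simp only: linear_op_scale[OF linear_op_Lop])
  also have "\<dots> = (of_nat (lev t) - of_nat (lev v)) * sign_op (interp_sum (sign_op (delta_fn t))) v"
    by (simp add: Lop_interp_fn sign_interp_sum_sign_delta_fn power_add algebra_simps)
  finally show ?thesis .
qed

text \<open>\<open>u = S P S \<delta>\<^sub>t\<close> is an eigenvector of \<open>L\<close> in the sense of \<open>interp_sum_level_eigen\<close>, so
  \<open>P u\<close> is concentrated on level \<open>\<ell>(t)\<close>, where it agrees with \<open>u = \<plusminus>p\<^sub>t\<close>.\<close>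
lemma interp_sum_sign_interp_sum_sign_delta_fn:
  "interp_sum (sign_op (interp_sum (sign_op (delta_fn t)))) m = delta_fn t m"
proof (cases "lev m = lev t")
  case True
  then have "interp_sum (sign_op (interp_sum (sign_op (delta_fn t)))) m
      = sign_op (interp_sum (sign_op (delta_fn t))) m"
    by (intro interp_sum_eq_self) (simp add: sign_interp_sum_sign_delta_fn interp_fn_below)
  also have "\<dots> = delta_fn t m"
    using True by (simp add: sign_interp_sum_sign_delta_fn interp_fn_lower)
  finally show ?thesis .
next
  case False
  moreover have "(of_nat (lev m) - of_nat (lev t))
      * interp_sum (sign_op (interp_sum (sign_op (delta_fn t)))) m = 0"
    by (intro interp_sum_level_eigen Lop_sign_interp_sum_sign_delta_fn)
  ultimately show ?thesis
    by (auto simp: delta_fn_def)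
qed

lemma hatf_hatf: "hatf W rho l (hatf W rho l g) = g"
proof -
  have "interp_sum \<circ> sign_op \<circ> interp_sum \<circ> sign_op = id"
  proof (rule lower_triangular_eqI[OF finite_level_le])
    show "linear_op (interp_sum \<circ> sign_op \<circ> interp_sum \<circ> sign_op)"
      by (simp add: sign_op_def linear_op_comp linear_op_interp_sum linear_op_mult_fn)
    show "lower_triangular lev (interp_sum \<circ> sign_op \<circ> interp_sum \<circ> sign_op)"
      by (simp add: sign_op_def lower_triangular_comp lower_triangular_interp_sum
          lower_triangular_mult_fn)
    show "linear_op id" "lower_triangular lev id"
      by (rule linear_op_id, rule lower_triangular_id)
    show "(interp_sum \<circ> sign_op \<circ> interp_sum \<circ> sign_op) (delta_fn t) = id (delta_fn t)" for t
      by (simp add: fun_eq_iff interp_sum_sign_interp_sum_sign_delta_fn)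
  qed
  then show ?thesis
    by (metis comp_apply id_apply hatf_eq)
qed

section \<open>Conjugation by the transform\<close>

lemma linear_op_hatf: "linear_op (hatf W rho l)"
proof -
  have "hatf W rho l = interp_sum \<circ> sign_op"
    by (simp add: fun_eq_iff hatf_eq)
  then show ?thesis
    by (simp add: sign_op_def linear_op_comp linear_op_interp_sum linear_op_mult_fn)
qed

lemma Dop_interp_sum:
  assumes "h \<in> PW W"
  shows "Dop W rho l h \<circ> interp_sum = interp_sum \<circ> mult_op rho h"
proof (rule lower_triangular_eqI[OF finite_level_le])
  show "linear_op (Dop W rho l h \<circ> interp_sum)" "linear_op (interp_sum \<circ> mult_op rho h)"
    by (simp_all add: linear_op_comp linear_op_Dop linear_op_interp_sum linear_op_mult_op)
  show "lower_triangular lev (Dop W rho l h \<circ> interp_sum)"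
    "lower_triangular lev (interp_sum \<circ> mult_op rho h)"
    by (simp_all add: lower_triangular_comp lower_triangular_Dop lower_triangular_interp_sum
        lower_triangular_mult_op)
  fix t
  have mult_delta: "mult_op rho h (delta_fn t) = (\<lambda>v. h (shift rho t) * delta_fn t v)"
    by (auto simp: mult_op_def delta_fn_def)
  have eigen: "Dop W rho l h (interp_fn t) = (\<lambda>m. h (shift rho t) * interp_fn t m)"
    using known_eigen assms unfolding interp_fn_def by simp
  show "(Dop W rho l h \<circ> interp_sum) (delta_fn t) = (interp_sum \<circ> mult_op rho h) (delta_fn t)"
    unfolding comp_apply interp_sum_delta_fn mult_delta eigen
    by (rule ext) (simp add: linear_op_scale[OF linear_op_interp_sum] interp_sum_delta_fn)
qed

lemma hatE_hatE: "hatE W rho l (hatE W rho l X) = X"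
  by (simp add: hatE_def hatf_hatf)

lemma hatE_comp: "hatE W rho l (X \<circ> Y) = hatE W rho l X \<circ> hatE W rho l Y"
  by (simp add: hatE_def hatf_hatf fun_eq_iff)

lemma hatE_id: "hatE W rho l id = id"
  by (simp add: hatE_def hatf_hatf fun_eq_iff)

lemma hatE_op_add: "hatE W rho l (op_add X Y) = op_add (hatE W rho l X) (hatE W rho l Y)"
  unfolding hatE_def op_add_def by (intro ext) (rule linear_op_add[OF linear_op_hatf])

lemma hatE_op_smult: "hatE W rho l (op_smult c X) = op_smult c (hatE W rho l X)"
  unfolding hatE_def op_smult_def by (intro ext) (rule linear_op_scale[OF linear_op_hatf])

lemma hatE_mult_op:
  assumes "h \<in> PW W"
  shows "hatE W rho l (mult_op rho h) = Dop W rho l h"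
proof (intro ext)
  fix g m
  have "sign_op (mult_op rho h x) = mult_op rho h (sign_op x)" for x
    by (simp add: fun_eq_iff sign_op_apply mult_op_def)
  then have "hatE W rho l (mult_op rho h) g = interp_sum (mult_op rho h (sign_op (hatf W rho l g)))"
    by (simp add: hatE_def hatf_eq)
  also have "\<dots> = Dop W rho l h (hatf W rho l (hatf W rho l g))"
    using fun_cong[OF Dop_interp_sum[OF assms]] by (simp add: hatf_eq)
  finally show "hatE W rho l (mult_op rho h) g m = Dop W rho l h g m"
    by (simp add: hatf_hatf)
qed

lemma hatE_Lop: "hatE W rho l L = op_neg L"
proof (intro ext)
  fix g m
  have "sign_op (L x) = (\<lambda>m. - L (sign_op x) m)" for x
    by (simp add: fun_eq_iff Lop_sign_op)
  then have "hatE W rho l L g m = - interp_sum (L (sign_op (hatf W rho l g))) m"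
    by (simp add: hatE_def hatf_eq linear_op_minus[OF linear_op_interp_sum])
  also have "\<dots> = - L (hatf W rho l (hatf W rho l g)) m"
    by (simp add: interp_sum_Lop hatf_eq)
  finally show "hatE W rho l L g m = op_neg L g m"
    by (simp add: hatf_hatf op_neg_def)
qed

lemma hatE_in_alg: "X \<in> alg W rho l \<Longrightarrow> hatE W rho l X \<in> alg W rho l"
proof (induction rule: alg.induct)
  case (alg_mult h)
  then show ?case by (simp add: hatE_mult_op alg_Dop)
next
  case alg_L
  then show ?case by (simp add: hatE_Lop alg_op_neg alg.alg_L)
next
  case alg_id
  show ?case unfolding hatE_id by (rule alg.alg_id)
next
  case (alg_add X Y)
  then show ?case by (simp add: hatE_op_add alg.alg_add)
next
  case (alg_smult X c)
  then show ?case by (simp add: hatE_op_smult alg.alg_smult)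
next
  case (alg_comp X Y)
  show ?case unfolding hatE_comp by (rule alg.alg_comp[OF alg_comp.IH])
qed

end

theorem theorem5p3:
  fixes W :: "('n::finite vec \<Rightarrow> 'n vec) set"
    and l :: "'n \<Rightarrow> nat"
    and rho :: "'n vec"
  assumes W: "finite_reflection_group W"
    and ell_inv: "\<forall>w\<in>W. \<forall>z. ellv l (w z) = ellv l z"
    and rho_V0: "rho \<in> V0 W"
    and rho_nonint: "non_integral W rho"
    \<comment> \<open>known facts quoted in the context\<close>
    and known_interp: "\<forall>lam. \<exists>!p. interp_prop W rho l lam p"
    and known_finite: "\<forall>mu. finite {tau. pint W rho l tau (shift rho mu) \<noteq> 0}"
    and known_fvanish: "\<forall>lam. \<forall>eta\<in>Lambda1 W l.
        \<not> (\<exists>mu. of_wt mu = (\<lambda>i. of_nat (lam i) - eta i)) \<longrightarrow> f_tau W rho eta (shift rho lam) = 0"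
    and known_adnil: "\<forall>h\<in>PW W. \<forall>n. n > polydeg h \<longrightarrow> (adL W rho l ^^ n) (mult_op rho h) = op_zero"
    and known_eigen: "\<forall>h\<in>PW W. \<forall>lam. Dop W rho l h (restr rho (pint W rho l lam))
        = (\<lambda>mu. h (shift rho lam) * restr rho (pint W rho l lam) mu)"
  shows "(\<forall>X\<in>alg W rho l. hatE W rho l X \<in> alg W rho l \<and> hatE W rho l (hatE W rho l X) = X)
       \<and> bij_betw (hatE W rho l) (alg W rho l) (alg W rho l)
       \<and> hatE W rho l id = id
       \<and> (\<forall>X\<in>alg W rho l. \<forall>Y\<in>alg W rho l.
            hatE W rho l (X \<circ> Y) = hatE W rho l X \<circ> hatE W rho l Y
          \<and> hatE W rho l (op_add X Y) = op_add (hatE W rho l X) (hatE W rho l Y))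
       \<and> (\<forall>c. \<forall>X\<in>alg W rho l. hatE W rho l (op_smult c X) = op_smult c (hatE W rho l X))
       \<and> (\<forall>h\<in>PW W. hatE W rho l (mult_op rho h) = Dop W rho l h)
       \<and> hatE W rho l (Lop W rho l) = op_neg (Lop W rho l)"
proof -
  \<comment> \<open>The hypotheses on \<open>W\<close> and \<open>\<rho>\<close>, \<open>known_finite\<close> and \<open>known_fvanish\<close> only serve to make the
    quoted facts true: the sum defining \<open>hat h\<close> is supported on levels \<open>\<le> \<ell>(\<mu>)\<close> by triangularity
    of the \<open>p\<^sub>\<tau>\<close>, and \<open>Lop\<close> only uses terms with \<open>\<lambda> - \<eta> \<in> \<Lambda>\<^sub>+\<close>.\<close>
  interpret interpolation_setting W l rho
    using ell_inv known_interp known_adnil known_eigen by unfold_locales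
  have "bij_betw (hatE W rho l) (alg W rho l) (alg W rho l)"
    by (rule bij_betw_byWitness[where f' = "hatE W rho l"]) (auto simp: hatE_hatE hatE_in_alg)
  then show ?thesis
    using hatE_in_alg hatE_hatE hatE_id hatE_comp hatE_op_add hatE_op_smult hatE_mult_op hatE_Lop
    by blast
qed

end
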